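(* Fix $x\in\mathbb{R}^d$ and let $L=\lceil 640\,d\ln k\rceil$. Then for every step $t$ with $D_t>0$, $$\Pr\big\{D_{t+L}\ge D_t/2\mid\mathcal{T}_t\big\}\le\frac1{k^3}.$$
   Context: Centers $C=\{c^1,\dots,c^k\}\subset\mathbb{R}^d$, $\delta\in(0,1)$, $\varepsilon=\min\{\delta/(15\ln k),1/320\}$. A median of a finite nonempty $S\subset\mathbb{R}^d$ is a point $m$ such that for every coordinate $i$ each of $\{c\in S:c_i<m_i\}$, $\{c\in S:c_i>m_i\}$ has at most $|S|/2$ elements. Algorithm: $\mathcal{T}_1$ is a root (cell $\mathbb{R}^d$) with assigned centers $C$. For $t=1,2,\dots$, while some leaf has at least two assigned centers: sample independently $i_t$ uniform in $\{1,\dots,d\}$, $\theta_t$ uniform in $(0,1)$, $\sigma_t$ uniform in $\{\pm1\}$; to every leaf $u$ of $\mathcal{T}_t$ with $|C_u|\ge2$ apply Divide-and-Share with $(i,\theta,\sigma)=(i_t,\theta_t,\sigma_t)$, giving $\mathcal{T}_{t+1}$. Divide-and-Share on node $u$: $m^u$ a median of $C_u$, $R_u=\max_{c\in C_u}\|c-m^u\|_2$, $Left=\{c\in C_u:c_i\le m^u_i+(\sigma+\varepsilon)\sqrt\theta R_u\}$, $Right=\{c\in C_u:c_i\ge m^u_i+(\sigma-\varepsilon)\sqrt\theta R_u\}$; if both nonempty, $u$ is split into children $\{y\in u: y_i\le m^u_i+\sigma\sqrt\theta R_u\}$ with centers $Left$ and $\{y\in u: y_i> m^u_i+\sigma\sqrt\theta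 R_u\}$ with centers $Right$; otherwise $u$ is unchanged. For the fixed $x$, $u_t$ is the leaf of $\mathcal{T}_t$ containing $x$, $C_t=C_{u_t}$, $D_t=\max\{\|a-b\|_2:a,b\in C_t\}$. If the algorithm has stopped before step $s$, $\mathcal{T}_s$ denotes the final tree. *)

theory Defs
  imports "HOL-Probability.Probability"
begin

text \<open>Points of R^d are vectors of type real^'d (d = CARD('d)).
  A leaf of the tree is a pair (cell, assigned centers); a tree is represented by
  the set of its leaves (the internal nodes play no role in the statement).\<close>

type_synonym 'd leaf = "(real^'d) set \<times> (real^'d) set"
type_synonym 'd choice = "'d \<times> real \<times> real"

definition is_median :: "(real^'d) set \<Rightarrow> real^'d \<Rightarrow> bool" where
  "is_median S m \<longleftrightarrow>
     (\<forall>i. real (card {c\<in>S. c$i < m$i}) \<le> real (card S) / 2 \<and>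
          real (card {c\<in>S. c$i > m$i}) \<le> real (card S) / 2)"

definition eps_param :: "real \<Rightarrow> nat \<Rightarrow> real" where
  "eps_param \<delta> k = min (\<delta> / (15 * ln (real k))) (1/320)"

definition divide_and_share ::
  "((real^'d) set \<Rightarrow> real^'d) \<Rightarrow> real \<Rightarrow> 'd choice \<Rightarrow> 'd leaf \<Rightarrow> 'd leaf set" where
  "divide_and_share med \<epsilon> ch u =
    (let (i, \<theta>, \<sigma>) = ch; (U, S) = u; m = med S;
         R = Max ((\<lambda>c. norm (c - m)) ` S);
         Left = {c\<in>S. c$i \<le> m$i + (\<sigma> + \<epsilon>) * sqrt \<theta> * R};
         Right = {c\<in>S. c$i \<ge> m$i + (\<sigma> - \<epsilon>) * sqrt \<theta> * R};
         a = m$i + \<sigma> * sqrt \<theta> * R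
     in if Left \<noteq> {} \<and> Right \<noteq> {}
        then {({y\<in>U. y$i \<le> a}, Left), ({y\<in>U. y$i > a}, Right)}
        else {u})"

definition tree_step ::
  "((real^'d) set \<Rightarrow> real^'d) \<Rightarrow> real \<Rightarrow> 'd leaf set \<Rightarrow> 'd choice \<Rightarrow> 'd leaf set" where
  "tree_step med \<epsilon> T ch =
    (if \<exists>u\<in>T. card (snd u) \<ge> 2
     then (\<Union>u\<in>T. if card (snd u) \<ge> 2 then divide_and_share med \<epsilon> ch u else {u})
     else T)"

text \<open>run med eps T0 w n: the tree after n iterations started from T0, using
  the choices w 0, ..., w (n-1).  With T0 the root, run ... n is T_(n+1).\<close>
primrec run ::
  "((real^'d) set \<Rightarrow> real^'d) \<Rightarrow> real \<Rightarrow> 'd leaf set \<Rightarrow> (nat \<Rightarrow> 'd choice) \<Rightarrow> nat \<Rightarrow> 'd leaf set" where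
  "run med \<epsilon> T0 w 0 = T0"
| "run med \<epsilon> T0 w (Suc n) = tree_step med \<epsilon> (run med \<epsilon> T0 w n) (w n)"

definition root_tree :: "(real^'d) set \<Rightarrow> 'd leaf set" where
  "root_tree C = {(UNIV, C)}"

definition leaf_centers :: "real^'d \<Rightarrow> 'd leaf set \<Rightarrow> (real^'d) set" where
  "leaf_centers x T = snd (THE u. u \<in> T \<and> x \<in> fst u)"

definition Dleaf :: "real^'d \<Rightarrow> 'd leaf set \<Rightarrow> real" where
  "Dleaf x T = diameter (leaf_centers x T)"

definition choice_measure :: "'d::finite choice measure" where
  "choice_measure = uniform_count_measure (UNIV :: 'd set) \<Otimes>\<^sub>M
     (uniform_measure lborel {0<..<1} \<Otimes>\<^sub>M uniform_count_measure {-1, 1})"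

definition valid_choice :: "'d choice \<Rightarrow> bool" where
  "valid_choice ch \<longleftrightarrow> fst (snd ch) \<in> {0<..<1} \<and> snd (snd ch) \<in> {-1, 1}"

end

theory Submission
  imports Defs
begin

text \<open>Let S be the set of centers of the leaf containing x at step t, and D its diameter.
  If after L further steps the diameter has not halved, some pair a, b of centers with
  D \<le> 2 norm (a - b) is still together. The cut (i, \<theta>, \<sigma>) separates such a pair whenever
  \<theta> falls into an interval read off from the normalised coordinates (c$i - m$i) / R of
  a and b, where m is the median and R the median radius. Summed over the coordinates and
  both signs these intervals have length at least 1/32, since R^2 \<le> 2 D^2 \<le> 8 norm (a - b)^2, so
  the pair survives one step with probability at most 1 - 1/(64 d). The choices are
  independent, so it survives L steps with probability at most (1 - 1/(64 d))^L \<le> k^-10,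
  and a union bound over at most k^2 pairs gives k^-8 \<le> k^-3.\<close>

section \<open>Markov chains driven by independent choices\<close>

primrec chain_run :: "('s \<Rightarrow> 'c \<Rightarrow> 's) \<Rightarrow> 's \<Rightarrow> (nat \<Rightarrow> 'c) \<Rightarrow> nat \<Rightarrow> 's" where
  "chain_run f s w 0 = s"
| "chain_run f s w (Suc n) = f (chain_run f s w n) (w n)"

lemma chain_run_cong: "(\<And>k. k < n \<Longrightarrow> w k = w' k) \<Longrightarrow> chain_run f s w n = chain_run f s w' n"
  by (induction n) auto

lemma measurable_chain_run:
  assumes X: "countable X" "s \<in> X" "\<And>t. t \<in> X \<Longrightarrow> f t \<in> measurable M (count_space X)"
    and n: "{..<n} \<subseteq> I"
  shows "(\<lambda>w. chain_run f s w n) \<in> measurable (PiM I (\<lambda>_. M)) (count_space X)"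
  using n
proof (induction n)
  case 0
  then show ?case using X(2) by simp
next
  case (Suc n)
  then have "{..<n} \<subseteq> I" "n \<in> I" by auto
  then have pair: "(\<lambda>w. (chain_run f s w n, w n)) \<in> measurable (PiM I (\<lambda>_. M)) (count_space X \<Otimes>\<^sub>M M)"
    using Suc.IH by (intro measurable_Pair measurable_component_singleton) auto
  have step: "(\<lambda>(t, c). f t c) \<in> measurable (count_space X \<Otimes>\<^sub>M M) (count_space X)"
    using X(1,3) by (intro measurable_pair_measure_countable1) auto
  show ?case using measurable_compose[OF pair step] by simp
qed

lemma emeasure_PiM_lessThan_Suc_le:
  assumes M: "sigma_finite_measure M"
    and F: "F \<in> sets (PiM {..<Suc n} (\<lambda>_. M))" and G: "G \<in> sets (PiM {..<n} (\<lambda>_. M))"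
    and slice: "\<And>w. w \<in> space (PiM {..<n} (\<lambda>_. M)) \<Longrightarrow>
                    emeasure M {c \<in> space M. w(n := c) \<in> F} \<le> q * indicator G w"
  shows "emeasure (PiM {..<Suc n} (\<lambda>_. M)) F \<le> q * emeasure (PiM {..<n} (\<lambda>_. M)) G"
proof -
  interpret product_sigma_finite "\<lambda>_. M" unfolding product_sigma_finite_def using M by blast
  have "emeasure (PiM {..<Suc n} (\<lambda>_. M)) F
      = (\<integral>\<^sup>+ w. (\<integral>\<^sup>+ c. indicator F (w(n := c)) \<partial>M) \<partial>PiM {..<n} (\<lambda>_. M))"
    using F by (simp add: lessThan_Suc product_nn_integral_insert[symmetric])
  also have "\<dots> \<le> (\<integral>\<^sup>+ w. q * indicator G w \<partial>PiM {..<n} (\<lambda>_. M))"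
  proof (rule nn_integral_mono)
    fix w assume w: "w \<in> space (PiM {..<n} (\<lambda>_. M))"
    have upd: "(\<lambda>c. w(n := c)) \<in> measurable M (PiM {..<Suc n} (\<lambda>_. M))"
      using measurable_component_update[OF w, of n] by (simp add: lessThan_Suc)
    have "(\<integral>\<^sup>+ c. indicator F (w(n := c)) \<partial>M) = (\<integral>\<^sup>+ c. indicator {c \<in> space M. w(n := c) \<in> F} c \<partial>M)"
      by (rule nn_integral_cong) (simp add: indicator_def)
    also have "\<dots> = emeasure M {c \<in> space M. w(n := c) \<in> F}"
      using measurable_sets[OF upd F] by (simp add: vimage_def Int_def conj_commute)
    finally show "(\<integral>\<^sup>+ c. indicator F (w(n := c)) \<partial>M) \<le> q * indicator G w" using slice[OF w] by simp
  qed
  also have "\<dots> = q * emeasure (PiM {..<n} (\<lambda>_. M)) G"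
    using G by (rule nn_integral_cmult_indicator)
  finally show ?thesis .
qed

lemma emeasure_chain_run_stays_le:
  assumes M: "prob_space M"
    and X: "countable X" "s \<in> X" "\<And>t. t \<in> X \<Longrightarrow> f t \<in> measurable M (count_space X)"
    and no_entry: "\<And>t c. t \<in> X \<Longrightarrow> c \<in> space M \<Longrightarrow> f t c \<in> B \<Longrightarrow> t \<in> B"
    and step: "\<And>t. t \<in> X \<Longrightarrow> t \<in> B \<Longrightarrow> emeasure M {c \<in> space M. f t c \<in> B} \<le> q"
  shows "emeasure (PiM {..<n} (\<lambda>_. M)) {w \<in> space (PiM {..<n} (\<lambda>_. M)). chain_run f s w n \<in> B} \<le> q ^ n"
proof (induction n)
  case 0
  show ?case using prob_space.emeasure_le_1[OF prob_space_PiM[OF M]] by simp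
next
  case (Suc n)
  have run: "(\<lambda>w. chain_run f s w m) \<in> measurable (PiM {..<m} (\<lambda>_. M)) (count_space X)" for m
    by (rule measurable_chain_run[where f=f, OF X order.refl])
  define E where "E m = {w \<in> space (PiM {..<m} (\<lambda>_. M)). chain_run f s w m \<in> B}" for m
  have E_sets: "E m \<in> sets (PiM {..<m} (\<lambda>_. M))" for m
  proof -
    have "E m = (\<lambda>w. chain_run f s w m) -` (B \<inter> X) \<inter> space (PiM {..<m} (\<lambda>_. M))"
      using measurable_space[OF run] by (auto simp: E_def)
    then show ?thesis using measurable_sets[OF run, of "B \<inter> X"] by simp
  qed
  have "emeasure (PiM {..<Suc n} (\<lambda>_. M)) (E (Suc n)) \<le> q * emeasure (PiM {..<n} (\<lambda>_. M)) (E n)"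
  proof (rule emeasure_PiM_lessThan_Suc_le[OF prob_space_imp_sigma_finite[OF M] E_sets E_sets])
    fix w assume w: "w \<in> space (PiM {..<n} (\<lambda>_. M))"
    define t where "t = chain_run f s w n"
    have t: "t \<in> X" using measurable_space[OF run w] by (simp add: t_def)
    have "w(n := c) \<in> space (PiM {..<Suc n} (\<lambda>_. M))" if "c \<in> space M" for c
      using measurable_space[OF measurable_component_update[OF w, of n] that] by (simp add: lessThan_Suc)
    moreover have "chain_run f s (w(n := c)) (Suc n) = f t c" for c
      using chain_run_cong[of n "w(n := c)" w f s] by (simp add: t_def)
    ultimately have slice: "{c \<in> space M. w(n := c) \<in> E (Suc n)} = {c \<in> space M. f t c \<in> B}"
      by (auto simp: E_def)
    show "emeasure M {c \<in> space M. w(n := c) \<in> E (Suc n)} \<le> q * indicator (E n) w"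
    proof (cases "t \<in> B")
      case True
      then have "indicator (E n) w = (1::ennreal)" using w by (simp add: E_def t_def)
      with step[OF t True] slice show ?thesis by simp
    next
      case False
      then have "{c \<in> space M. f t c \<in> B} = {}" using no_entry[OF t] by blast
      then have "{c \<in> space M. w(n := c) \<in> E (Suc n)} = {}" by (rule trans[OF slice])
      then show ?thesis by (simp only: emeasure_empty) simp
    qed
  qed
  also have "\<dots> \<le> q * q ^ n" using Suc.IH by (intro mult_left_mono) (auto simp: E_def)
  finally show ?case by (simp add: E_def mult.commute)
qed

section \<open>The leaf containing x\<close>

definition median_radius :: "((real^'d) set \<Rightarrow> real^'d) \<Rightarrow> (real^'d) set \<Rightarrow> real" where
  "median_radius med S = Max ((\<lambda>c. norm (c - med S)) ` S)"

definition left_centers ::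
  "((real^'d) set \<Rightarrow> real^'d) \<Rightarrow> real \<Rightarrow> (real^'d) set \<Rightarrow> 'd choice \<Rightarrow> (real^'d) set" where
  "left_centers med \<epsilon> S ch = {c\<in>S. c $ fst ch \<le>
     med S $ fst ch + (snd (snd ch) + \<epsilon>) * sqrt (fst (snd ch)) * median_radius med S}"

definition right_centers ::
  "((real^'d) set \<Rightarrow> real^'d) \<Rightarrow> real \<Rightarrow> (real^'d) set \<Rightarrow> 'd choice \<Rightarrow> (real^'d) set" where
  "right_centers med \<epsilon> S ch = {c\<in>S. med S $ fst ch + (snd (snd ch) - \<epsilon>) * sqrt (fst (snd ch)) * median_radius med S
     \<le> c $ fst ch}"

definition split_threshold :: "((real^'d) set \<Rightarrow> real^'d) \<Rightarrow> (real^'d) set \<Rightarrow> 'd choice \<Rightarrow> real" where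
  "split_threshold med S ch = med S $ fst ch + snd (snd ch) * sqrt (fst (snd ch)) * median_radius med S"

text \<open>The next centers of the leaf containing x depend only on its current centers S and the
  choice, so the leaf of x evolves as a Markov chain of its own (leaf_centers_run).\<close>

definition centers_step ::
  "((real^'d) set \<Rightarrow> real^'d) \<Rightarrow> real \<Rightarrow> real^'d \<Rightarrow> (real^'d) set \<Rightarrow> 'd choice \<Rightarrow> (real^'d) set" where
  "centers_step med \<epsilon> x S ch =
    (if 2 \<le> card S \<and> left_centers med \<epsilon> S ch \<noteq> {} \<and> right_centers med \<epsilon> S ch \<noteq> {}
     then if x $ fst ch \<le> split_threshold med S ch then left_centers med \<epsilon> S ch else right_centers med \<epsilon> S ch
     else S)"

definition partition_tree :: "(real^'d) set \<Rightarrow> 'd leaf set \<Rightarrow> bool" where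
  "partition_tree C T \<longleftrightarrow> (\<forall>y. \<exists>!u. u \<in> T \<and> y \<in> fst u) \<and> (\<forall>u\<in>T. snd u \<subseteq> C)"

lemma centers_step_subset: "centers_step med \<epsilon> x S ch \<subseteq> S"
  unfolding centers_step_def left_centers_def right_centers_def by auto

lemma chain_run_centers_step_subset: "chain_run (centers_step med \<epsilon> x) S w n \<subseteq> S"
  by (induction n) (use centers_step_subset in fastforce)+

lemma leaf_centers_eqI:
  assumes "partition_tree C T" "u \<in> T" "x \<in> fst u"
  shows "leaf_centers x T = snd u"
proof -
  have "(THE u. u \<in> T \<and> x \<in> fst u) = u"
    using assms unfolding partition_tree_def by (intro the_equality) auto
  then show ?thesis by (simp add: leaf_centers_def)
qed

lemma partition_treeE:
  assumes "partition_tree C T"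
  obtains U S where "(U, S) \<in> T" "x \<in> U" "leaf_centers x T = S" "S \<subseteq> C"
proof -
  obtain u where u: "u \<in> T" "x \<in> fst u" using assms unfolding partition_tree_def by metis
  moreover have "leaf_centers x T = snd u" by (rule leaf_centers_eqI[OF assms u])
  moreover have "snd u \<subseteq> C" using assms u(1) unfolding partition_tree_def by blast
  ultimately show thesis using that[of "fst u" "snd u"] by simp
qed

lemma divide_and_share_cases:
  obtains "divide_and_share med \<epsilon> ch (U, S) = {(U, S)}"
  | i a L R where "divide_and_share med \<epsilon> ch (U, S) = {({y\<in>U. y$i \<le> a}, L), ({y\<in>U. a < y$i}, R)}"
      "L \<subseteq> S" "R \<subseteq> S"
proof -
  have "divide_and_share med \<epsilon> ch (U, S) = {(U, S)} \<or>
    (\<exists>i a L R. divide_and_share med \<epsilon> ch (U, S) = {({y\<in>U. y$i \<le> a}, L), ({y\<in>U. a < y$i}, R)} \<and>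
      L \<subseteq> S \<and> R \<subseteq> S)"
    unfolding divide_and_share_def by (cases ch) (auto simp: Let_def)
  with that show thesis by blast
qed

lemma divide_and_share_subset:
  assumes "(U', S') \<in> divide_and_share med \<epsilon> ch (U, S)"
  shows "U' \<subseteq> U" "S' \<subseteq> S"
  using assms by (cases rule: divide_and_share_cases[of med \<epsilon> ch U S]; auto)+

lemma divide_and_share_partition:
  assumes "y \<in> U"
  shows "\<exists>!v. v \<in> divide_and_share med \<epsilon> ch (U, S) \<and> y \<in> fst v"
proof (cases rule: divide_and_share_cases[of med \<epsilon> ch U S])
  case 1
  then show ?thesis using assms by auto
next
  case (2 i a L R)
  then show ?thesis using assms by (cases "y$i \<le> a") auto
qed

lemma divide_and_share_child:
  assumes "x \<in> U" "2 \<le> card S"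
  shows "\<exists>U'. (U', centers_step med \<epsilon> x S ch) \<in> divide_and_share med \<epsilon> ch (U, S) \<and> x \<in> U'"
proof -
  obtain i \<theta> \<sigma> where ch: "ch = (i, \<theta>, \<sigma>)" by (cases ch)
  then have i: "fst ch = i" by simp
  let ?L = "left_centers med \<epsilon> S ch" and ?R = "right_centers med \<epsilon> S ch"
    and ?a = "split_threshold med S ch"
  have split: "divide_and_share med \<epsilon> ch (U, S) = (if ?L \<noteq> {} \<and> ?R \<noteq> {}
      then {({y\<in>U. y$i \<le> ?a}, ?L), ({y\<in>U. ?a < y$i}, ?R)} else {(U, S)})"
    by (simp only: divide_and_share_def ch Let_def prod.case fst_conv snd_conv left_centers_def
        right_centers_def split_threshold_def median_radius_def)
  consider (left) "?L \<noteq> {} \<and> ?R \<noteq> {}" "x$i \<le> ?a" | (right) "?L \<noteq> {} \<and> ?R \<noteq> {}" "\<not> x$i \<le> ?a"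
    | (kept) "\<not> (?L \<noteq> {} \<and> ?R \<noteq> {})"
    by blast
  then show ?thesis
  proof cases
    case left
    then show ?thesis using assms
      by (intro exI[of _ "{y\<in>U. y$i \<le> ?a}"]) (simp add: split centers_step_def i)
  next
    case right
    then show ?thesis using assms
      by (intro exI[of _ "{y\<in>U. ?a < y$i}"]) (simp add: split centers_step_def i)
  next
    case kept
    then have "divide_and_share med \<epsilon> ch (U, S) = {(U, S)}" "centers_step med \<epsilon> x S ch = S"
      unfolding split centers_step_def by auto
    then show ?thesis using assms by auto
  qed
qed

lemma partition_tree_step:
  assumes "partition_tree C T"
  shows "partition_tree C (tree_step med \<epsilon> T ch)"
proof (cases "\<exists>u\<in>T. 2 \<le> card (snd u)")
  case False
  then show ?thesis using assms by (simp add: tree_step_def)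
next
  case True
  define F where "F u = (if 2 \<le> card (snd u) then divide_and_share med \<epsilon> ch u else {u})" for u
  have step: "tree_step med \<epsilon> T ch = (\<Union>u\<in>T. F u)"
    using True by (simp add: tree_step_def F_def)
  have F_subset: "fst v \<subseteq> fst u" "snd v \<subseteq> snd u" if "v \<in> F u" for u v
    using that divide_and_share_subset[of "fst v" "snd v" med \<epsilon> ch "fst u" "snd u"]
    by (auto simp: F_def split: if_splits)
  have F_partition: "\<exists>!v. v \<in> F u \<and> y \<in> fst v" if "y \<in> fst u" for u y
    using that divide_and_share_partition[of y "fst u" med \<epsilon> ch "snd u"] by (auto simp: F_def)
  have unique: "\<exists>!v. v \<in> (\<Union>u\<in>T. F u) \<and> y \<in> fst v" for y
  proof -
    obtain u where u: "u \<in> T" "y \<in> fst u" and u_unique: "\<And>u'. u' \<in> T \<Longrightarrow> y \<in> fst u' \<Longrightarrow> u' = u"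
      using assms unfolding partition_tree_def by metis
    obtain v where v: "v \<in> F u" "y \<in> fst v" and v_unique: "\<And>v'. v' \<in> F u \<Longrightarrow> y \<in> fst v' \<Longrightarrow> v' = v"
      using F_partition[OF u(2)] by metis
    show ?thesis
    proof (rule ex1I[of _ v])
      show "v \<in> (\<Union>u\<in>T. F u) \<and> y \<in> fst v" using u v by blast
    next
      fix v' assume v': "v' \<in> (\<Union>u\<in>T. F u) \<and> y \<in> fst v'"
      then obtain u' where u': "u' \<in> T" "v' \<in> F u'" by blast
      with v' F_subset have "u' = u" using u_unique by blast
      with u' v' v_unique show "v' = v" by blast
    qed
  qed
  have centers: "snd v \<subseteq> C" if "v \<in> (\<Union>u\<in>T. F u)" for v
    using that F_subset assms unfolding partition_tree_def by blast
  show ?thesis unfolding partition_tree_def step by (intro conjI allI ballI unique centers)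
qed

lemma leaf_centers_tree_step:
  assumes T: "partition_tree C T"
  shows "leaf_centers x (tree_step med \<epsilon> T ch) = centers_step med \<epsilon> x (leaf_centers x T) ch"
proof -
  obtain U S where u: "(U, S) \<in> T" "x \<in> U" and S: "leaf_centers x T = S"
    using partition_treeE[OF T] by metis
  have T': "partition_tree C (tree_step med \<epsilon> T ch)" by (rule partition_tree_step[OF T])
  show ?thesis
  proof (cases "2 \<le> card S")
    case False
    then have "(U, S) \<in> tree_step med \<epsilon> T ch" using u by (auto simp: tree_step_def)
    then have "leaf_centers x (tree_step med \<epsilon> T ch) = S"
      using leaf_centers_eqI[OF T', of "(U, S)" x] u(2) by simp
    with False S show ?thesis by (simp add: centers_step_def)
  next
    case True
    then obtain U' where "(U', centers_step med \<epsilon> x S ch) \<in> divide_and_share med \<epsilon> ch (U, S)" "x \<in> U'"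
      using divide_and_share_child[OF u(2)] by blast
    moreover have "divide_and_share med \<epsilon> ch (U, S) \<subseteq> tree_step med \<epsilon> T ch"
      using True u by (force simp: tree_step_def)
    ultimately show ?thesis using leaf_centers_eqI[OF T'] S by force
  qed
qed

lemma partition_tree_run: "partition_tree C T \<Longrightarrow> partition_tree C (run med \<epsilon> T w n)"
  by (induction n) (simp_all add: partition_tree_step)

lemma leaf_centers_run:
  "partition_tree C T \<Longrightarrow>
    leaf_centers x (run med \<epsilon> T w n) = chain_run (centers_step med \<epsilon> x) (leaf_centers x T) w n"
  by (induction n) (simp_all add: leaf_centers_tree_step[OF partition_tree_run])

lemma partition_tree_root: "partition_tree C (root_tree C)"
  unfolding partition_tree_def root_tree_def by auto

section \<open>The median radius\<close>

lemma norm_pow_2_cart: "norm (x :: real^'n) ^ 2 = (\<Sum>i\<in>UNIV. (x$i)^2)"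
  unfolding power2_norm_eq_inner inner_vec_def by (simp add: power2_eq_square)

lemma sq_dist_median_le_sum:
  fixes f :: "'a \<Rightarrow> real"
  assumes S: "finite S" "c \<in> S"
    and below: "real (card {c\<in>S. f c < m}) \<le> real (card S) / 2"
    and above: "real (card {c\<in>S. m < f c}) \<le> real (card S) / 2"
  shows "real (card S) * (f c - m)^2 \<le> 2 * (\<Sum>c'\<in>S. (f c - f c')^2)"
proof -
  have one_side: "real (card S) * (f c - m)^2 \<le> 2 * (\<Sum>c'\<in>S. (f c - f c')^2)"
    if "f c \<le> m" "real (card {c\<in>S. f c < m}) \<le> real (card S) / 2" for f :: "'a \<Rightarrow> real" and m
  proof -
    \<comment> \<open>At least half of S lies beyond m as seen from c, and each such point is farther from c than m.\<close>
    define G where "G = {c'\<in>S. m \<le> f c'}"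
    have "G = S - {c\<in>S. f c < m}" by (auto simp: G_def)
    then have "real (card G) = real (card S) - real (card {c\<in>S. f c < m})"
      using S by (simp add: card_Diff_subset card_mono of_nat_diff)
    with that(2) have half: "real (card S) \<le> 2 * real (card G)" by linarith
    have far: "(f c - m)^2 \<le> (f c - f c')^2" if "c' \<in> G" for c'
    proof -
      have "(m - f c)^2 \<le> (f c' - f c)^2"
        using that \<open>f c \<le> m\<close> by (intro power_mono) (auto simp: G_def)
      then show ?thesis by (simp add: power2_commute)
    qed
    have "real (card G) * (f c - m)^2 = (\<Sum>c'\<in>G. (f c - m)^2)" by simp
    also have "\<dots> \<le> (\<Sum>c'\<in>G. (f c - f c')^2)" by (rule sum_mono) (rule far)
    also have "\<dots> \<le> (\<Sum>c'\<in>S. (f c - f c')^2)" using S by (intro sum_mono2) (auto simp: G_def)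
    finally have "real (card G) * (f c - m)^2 \<le> (\<Sum>c'\<in>S. (f c - f c')^2)" .
    moreover have "real (card S) * (f c - m)^2 \<le> 2 * real (card G) * (f c - m)^2"
      using half by (intro mult_right_mono) auto
    ultimately show ?thesis by linarith
  qed
  show ?thesis
  proof (cases "f c \<le> m")
    case True
    then show ?thesis by (rule one_side[OF _ below])
  next
    case False
    have neg: "(- u - - v)^2 = (u - v)^2" for u v :: real by (simp add: power2_commute)
    have "{c\<in>S. - f c < - m} = {c\<in>S. m < f c}" by auto
    then show ?thesis using one_side[of "\<lambda>c. - f c" "- m"] False above by (simp only: neg)
  qed
qed

lemma norm_sub_median_sq_le:
  fixes S :: "(real^'d) set"
  assumes S: "finite S" "c \<in> S" and med: "is_median S m"
    and D: "\<And>a b. a \<in> S \<Longrightarrow> b \<in> S \<Longrightarrow> norm (a - b) \<le> D"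
  shows "norm (c - m) ^ 2 \<le> 2 * D^2"
proof -
  have "real (card S) * norm (c - m) ^ 2 = (\<Sum>i\<in>UNIV. real (card S) * (c$i - m$i)^2)"
    by (simp add: norm_pow_2_cart sum_distrib_left)
  also have "\<dots> \<le> (\<Sum>i\<in>UNIV. 2 * (\<Sum>c'\<in>S. (c$i - c'$i)^2))"
    using med by (intro sum_mono sq_dist_median_le_sum[OF S]) (auto simp: is_median_def)
  also have "\<dots> = 2 * (\<Sum>c'\<in>S. norm (c - c') ^ 2)"
    by (simp add: norm_pow_2_cart sum_distrib_left sum.swap[of _ UNIV S])
  also have "\<dots> \<le> 2 * (\<Sum>c'\<in>S. D^2)"
    using D[OF S(2)] by (intro mult_left_mono sum_mono power_mono) auto
  also have "\<dots> = real (card S) * (2 * D^2)" by simp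
  finally have "real (card S) * norm (c - m) ^ 2 \<le> real (card S) * (2 * D^2)" .
  moreover have "0 < real (card S)" using S by (auto simp: card_gt_0_iff)
  ultimately show ?thesis by simp
qed

lemma norm_sub_le_median_radius: "finite S \<Longrightarrow> c \<in> S \<Longrightarrow> norm (c - med S) \<le> median_radius med S"
  unfolding median_radius_def by (intro Max_ge) auto

lemma median_radius_pos:
  assumes "finite S" "a \<in> S" "b \<in> S" "a \<noteq> b"
  shows "0 < median_radius med S"
proof (rule ccontr)
  assume "\<not> 0 < median_radius med S"
  then have "a = med S" "b = med S"
    using norm_sub_le_median_radius[OF assms(1)] assms(2,3) by (meson norm_le_zero_iff order_trans not_less eq_iff_diff_eq_0)+
  with assms(4) show False by simp
qed

lemma median_radius_sq_le:
  assumes "finite S" "S \<noteq> {}" "is_median S (med S)"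
    and "\<And>a b. a \<in> S \<Longrightarrow> b \<in> S \<Longrightarrow> norm (a - b) \<le> D"
  shows "median_radius med S ^ 2 \<le> 2 * D^2"
proof -
  have "median_radius med S \<in> (\<lambda>c. norm (c - med S)) ` S"
    unfolding median_radius_def using assms(1,2) by (intro Max_in) auto
  then obtain c where "c \<in> S" "median_radius med S = norm (c - med S)" by auto
  then show ?thesis using norm_sub_median_sq_le[OF assms(1) _ assms(3,4)] by simp
qed

section \<open>Separating a pair of centers in one step\<close>

lemma inverse_sq_one_plus_ge:
  fixes \<epsilon> :: real
  assumes "0 \<le> \<epsilon>"
  shows "1 - 2*\<epsilon> \<le> 1 / (1+\<epsilon>)^2"
proof -
  have "(1 - 2*\<epsilon>) * (1+\<epsilon>)^2 = 1 - 3*\<epsilon>^2 - 2*\<epsilon>^3"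
    by (simp add: power2_eq_square power3_eq_cube algebra_simps)
  also have "\<dots> \<le> 1" using zero_le_power[OF assms, of 3] zero_le_power2[of \<epsilon>] by linarith
  finally show ?thesis using assms by (simp add: pos_le_divide_eq)
qed

lemma inverse_sq_one_minus_le:
  fixes \<epsilon> :: real
  assumes "0 \<le> \<epsilon>" "\<epsilon> \<le> 1/5"
  shows "1 / (1-\<epsilon>)^2 \<le> 1 + 3*\<epsilon>"
proof -
  have "0 \<le> \<epsilon> * (1 - 5*\<epsilon> + 3*\<epsilon>^2)" using assms by (intro mult_nonneg_nonneg) auto
  then have "1 \<le> 1 + \<epsilon> * (1 - 5*\<epsilon> + 3*\<epsilon>^2)" by simp
  also have "\<dots> = (1 + 3*\<epsilon>) * (1-\<epsilon>)^2" by (simp add: power2_eq_square algebra_simps)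
  finally show ?thesis using assms by (simp add: divide_le_eq)
qed

text \<open>If sep_lo < \<theta> < sep_hi, the cut on coordinate i at offset \<sigma> sqrt \<theta> R from the median
  puts two centers whose normalised offsets (c$i - m$i) / R are p and q on opposite sides of
  the band of half-width \<epsilon> sqrt \<theta> R shared by both children, so no child receives both.\<close>

definition sep_lo :: "real \<Rightarrow> real \<Rightarrow> real \<Rightarrow> real \<Rightarrow> real" where
  "sep_lo \<epsilon> \<sigma> p q = (max (min (\<sigma>*p) (\<sigma>*q)) 0 / (1-\<epsilon>))^2"

definition sep_hi :: "real \<Rightarrow> real \<Rightarrow> real \<Rightarrow> real \<Rightarrow> real" where
  "sep_hi \<epsilon> \<sigma> p q = (max (max (\<sigma>*p) (\<sigma>*q)) 0 / (1+\<epsilon>))^2"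

definition sep_len :: "real \<Rightarrow> real \<Rightarrow> real \<Rightarrow> real \<Rightarrow> real" where
  "sep_len \<epsilon> \<sigma> p q = max 0 (sep_hi \<epsilon> \<sigma> p q - sep_lo \<epsilon> \<sigma> p q)"

lemma sep_len_nonneg: "0 \<le> sep_len \<epsilon> \<sigma> p q"
  by (simp add: sep_len_def)

lemma sep_len_commute: "sep_len \<epsilon> \<sigma> p q = sep_len \<epsilon> \<sigma> q p"
  unfolding sep_len_def sep_lo_def sep_hi_def by (simp add: max.commute min.commute)

lemma sep_len_ge:
  fixes \<epsilon> :: real
  assumes \<epsilon>: "0 \<le> \<epsilon>" "\<epsilon> \<le> 1/5"
  shows "(max (max (\<sigma>*p) (\<sigma>*q)) 0)^2 * (1 - 2*\<epsilon>) - (max (min (\<sigma>*p) (\<sigma>*q)) 0)^2 * (1 + 3*\<epsilon>)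
           \<le> sep_len \<epsilon> \<sigma> p q"
proof -
  let ?u = "(max (max (\<sigma>*p) (\<sigma>*q)) 0)^2" and ?v = "(max (min (\<sigma>*p) (\<sigma>*q)) 0)^2"
  have "?u * (1 - 2*\<epsilon>) \<le> ?u * (1 / (1+\<epsilon>)^2)"
    using inverse_sq_one_plus_ge[OF \<epsilon>(1)] by (intro mult_left_mono) auto
  moreover have "?v * (1 / (1-\<epsilon>)^2) \<le> ?v * (1 + 3*\<epsilon>)"
    using inverse_sq_one_minus_le[OF \<epsilon>] by (intro mult_left_mono) auto
  moreover have "sep_hi \<epsilon> \<sigma> p q - sep_lo \<epsilon> \<sigma> p q = ?u * (1 / (1+\<epsilon>)^2) - ?v * (1 / (1-\<epsilon>)^2)"
    by (simp add: sep_hi_def sep_lo_def power_divide)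
  ultimately show ?thesis unfolding sep_len_def by linarith
qed

lemma sep_len_sum_ge_ordered:
  fixes p q \<epsilon> :: real
  assumes \<epsilon>: "0 \<le> \<epsilon>" "\<epsilon> \<le> 1/5" and pq: "p \<le> q"
  shows "(p-q)^2/2 - 5*\<epsilon>*(p^2+q^2) \<le> sep_len \<epsilon> 1 p q + sep_len \<epsilon> (-1) p q"
proof -
  note plus = sep_len_ge[OF \<epsilon>, of 1 p q] and minus = sep_len_ge[OF \<epsilon>, of "-1" p q]
  have pos: "0 \<le> \<epsilon> * p^2" "0 \<le> \<epsilon> * q^2" using \<epsilon> by auto
  have sq: "(p-q)^2 = p^2 - 2*(p*q) + q^2" by (simp add: power2_eq_square algebra_simps)
  consider "0 \<le> p" | "q \<le> 0" | "p < 0" "0 < q" by linarith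
  then show ?thesis
  proof cases
    case 1
    with pq have "max (max p q) 0 = q" "max (min p q) 0 = p" by (auto simp: max_def min_def)
    then have "q^2 * (1 - 2*\<epsilon>) - p^2 * (1 + 3*\<epsilon>) \<le> sep_len \<epsilon> 1 p q"
      using plus by simp
    moreover have "0 \<le> (q - p) * (q + 3*p)" using 1 pq by simp
    ultimately show ?thesis using pos sep_len_nonneg[of \<epsilon> "-1" p q]
      by (simp add: sq algebra_simps power2_eq_square)
  next
    case 2
    with pq have "max (max (-p) (-q)) 0 = -p" "max (min (-p) (-q)) 0 = -q" by (auto simp: max_def min_def)
    then have "p^2 * (1 - 2*\<epsilon>) - q^2 * (1 + 3*\<epsilon>) \<le> sep_len \<epsilon> (-1) p q"
      using minus by simp
    moreover have "0 \<le> (q - p) * (- p - 3*q)" using 2 pq by simp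
    ultimately show ?thesis using pos sep_len_nonneg[of \<epsilon> 1 p q]
      by (simp add: sq algebra_simps power2_eq_square)
  next
    case 3
    then have "q^2 * (1 - 2*\<epsilon>) \<le> sep_len \<epsilon> 1 p q" "p^2 * (1 - 2*\<epsilon>) \<le> sep_len \<epsilon> (-1) p q"
      using plus minus pq by (simp_all add: max_def min_def)
    moreover have "0 \<le> (p + q)^2" by simp
    ultimately show ?thesis using pos by (simp add: sq algebra_simps power2_eq_square)
  qed
qed

lemma sep_len_sum_ge:
  fixes p q \<epsilon> :: real
  assumes "0 \<le> \<epsilon>" "\<epsilon> \<le> 1/5"
  shows "(p-q)^2/2 - 5*\<epsilon>*(p^2+q^2) \<le> sep_len \<epsilon> 1 p q + sep_len \<epsilon> (-1) p q"
  using sep_len_sum_ge_ordered[OF assms, of p q] sep_len_sum_ge_ordered[OF assms, of q p]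
  by (cases "p \<le> q") (simp_all add: sep_len_commute power2_commute add.commute)

lemma sep_len_total_ge:
  fixes a b m :: "real^'d"
  assumes R: "0 < R" "norm (a - m) \<le> R" "norm (b - m) \<le> R" and far: "R^2 \<le> 8 * norm (a - b)^2"
    and \<epsilon>: "0 \<le> \<epsilon>" "\<epsilon> \<le> 1/320"
  shows "1/32 \<le> (\<Sum>i\<in>UNIV. sep_len \<epsilon> 1 ((a$i - m$i) / R) ((b$i - m$i) / R)
                        + sep_len \<epsilon> (-1) ((a$i - m$i) / R) ((b$i - m$i) / R))"
proof -
  define p where "p i = (a$i - m$i) / R" for i
  define q where "q i = (b$i - m$i) / R" for i
  have "(p i - q i)^2 = ((a - b)$i)^2 / R^2" "(p i)^2 = ((a - m)$i)^2 / R^2" "(q i)^2 = ((b - m)$i)^2 / R^2" for i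
    by (simp_all add: p_def q_def power_divide diff_divide_distrib[symmetric])
  then have sums: "(\<Sum>i\<in>UNIV. (p i - q i)^2) = norm (a - b)^2 / R^2"
      "(\<Sum>i\<in>UNIV. (p i)^2) = norm (a - m)^2 / R^2" "(\<Sum>i\<in>UNIV. (q i)^2) = norm (b - m)^2 / R^2"
    by (simp_all add: norm_pow_2_cart sum_divide_distrib)
  have key: "1/32 \<le> u / 2 - 5 * \<epsilon> * v" if "1/8 \<le> u" "v \<le> 2" for u v
  proof -
    have "5 * \<epsilon> * v \<le> 5 * \<epsilon> * 2" using that(2) \<epsilon> by (intro mult_left_mono) auto
    then show ?thesis using that(1) \<epsilon> by linarith
  qed
  have "1/8 \<le> norm (a - b)^2 / R^2" using far R(1) by (simp add: le_divide_eq)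
  moreover have "norm (a - m)^2 / R^2 \<le> 1" "norm (b - m)^2 / R^2 \<le> 1"
    using R by (simp_all add: divide_le_eq power_mono)
  ultimately have "1/32 \<le> (\<Sum>i\<in>UNIV. (p i - q i)^2) / 2 - 5 * \<epsilon> * ((\<Sum>i\<in>UNIV. (p i)^2) + (\<Sum>i\<in>UNIV. (q i)^2))"
    unfolding sums by (intro key) auto
  also have "\<dots> = (\<Sum>i\<in>UNIV. (p i - q i)^2 / 2 - 5 * \<epsilon> * ((p i)^2 + (q i)^2))"
    by (simp add: sum_subtractf sum_divide_distrib sum_distrib_left[symmetric] sum.distrib)
  also have "\<dots> \<le> (\<Sum>i\<in>UNIV. sep_len \<epsilon> 1 (p i) (q i) + sep_len \<epsilon> (-1) (p i) (q i))"
    using \<epsilon> by (intro sum_mono sep_len_sum_ge) auto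
  finally show ?thesis by (simp add: p_def q_def)
qed

definition separating_boxes :: "real \<Rightarrow> ('d \<Rightarrow> real) \<Rightarrow> ('d \<Rightarrow> real) \<Rightarrow> 'd choice set" where
  "separating_boxes \<epsilon> p q =
    (\<Union>(i, \<sigma>)\<in>UNIV \<times> {-1, 1}. {i} \<times> ({sep_lo \<epsilon> \<sigma> (p i) (q i)<..<sep_hi \<epsilon> \<sigma> (p i) (q i)} \<times> {\<sigma>}))"

lemma centers_step_separates_sides:
  assumes S: "2 \<le> card S" "a \<in> S" "b \<in> S" and \<sigma>: "\<sigma> \<in> {-1, 1}" and \<epsilon>: "0 \<le> \<epsilon>" and \<theta>: "0 \<le> \<theta>"
    and a: "\<sigma> * (a$i - med S$i) < (1-\<epsilon>) * sqrt \<theta> * median_radius med S"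
    and b: "(1+\<epsilon>) * sqrt \<theta> * median_radius med S < \<sigma> * (b$i - med S$i)"
  shows "\<not> (a \<in> centers_step med \<epsilon> x S (i, \<theta>, \<sigma>) \<and> b \<in> centers_step med \<epsilon> x S (i, \<theta>, \<sigma>))"
proof -
  let ?L = "left_centers med \<epsilon> S (i, \<theta>, \<sigma>)" and ?R = "right_centers med \<epsilon> S (i, \<theta>, \<sigma>)"
  define t where "t = sqrt \<theta> * median_radius med S"
  have "finite S" using S(1) card.infinite by force
  then have "0 \<le> median_radius med S"
    using order_trans[OF norm_ge_zero norm_sub_le_median_radius] S(2) by blast
  then have E: "0 \<le> \<epsilon> * t" using \<epsilon> \<theta> by (simp add: t_def)
  have L: "?L = {c\<in>S. c$i \<le> med S$i + \<sigma> * t + \<epsilon> * t}" and R: "?R = {c\<in>S. med S$i + \<sigma> * t - \<epsilon> * t \<le> c$i}"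
    by (auto simp: left_centers_def right_centers_def t_def algebra_simps)
  have a': "\<sigma> * (a$i - med S$i) < t - \<epsilon> * t" and b': "t + \<epsilon> * t < \<sigma> * (b$i - med S$i)"
    using a b by (simp_all add: t_def algebra_simps)
  consider "\<sigma> = 1" | "\<sigma> = -1" using \<sigma> by auto
  then have sides: "(a \<in> ?L \<and> a \<notin> ?R \<and> b \<in> ?R \<and> b \<notin> ?L) \<or> (b \<in> ?L \<and> b \<notin> ?R \<and> a \<in> ?R \<and> a \<notin> ?L)"
  proof cases
    case 1
    then show ?thesis using S(2,3) a' b' E unfolding L R by simp
  next
    case 2
    then show ?thesis using S(2,3) a' b' E unfolding L R by simp
  qed
  then have "?L \<noteq> {}" "?R \<noteq> {}" by blast+
  then have "centers_step med \<epsilon> x S (i, \<theta>, \<sigma>) = (if x$i \<le> split_threshold med S (i, \<theta>, \<sigma>) then ?L else ?R)"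
    using S(1) by (simp add: centers_step_def)
  then show ?thesis using sides by (cases "x$i \<le> split_threshold med S (i, \<theta>, \<sigma>)") auto
qed

lemma centers_step_separates:
  fixes S :: "(real^'d) set" and i :: 'd
  assumes S: "2 \<le> card S" "a \<in> S" "b \<in> S" and R: "0 < median_radius med S"
    and \<epsilon>: "0 \<le> \<epsilon>" "\<epsilon> < 1" and \<sigma>: "\<sigma> \<in> {-1, 1}"
  defines "p \<equiv> (a$i - med S$i) / median_radius med S"
      and "q \<equiv> (b$i - med S$i) / median_radius med S"
  assumes \<theta>: "sep_lo \<epsilon> \<sigma> p q < \<theta>" "\<theta> < sep_hi \<epsilon> \<sigma> p q"
  shows "\<not> (a \<in> centers_step med \<epsilon> x S (i, \<theta>, \<sigma>) \<and> b \<in> centers_step med \<epsilon> x S (i, \<theta>, \<sigma>))"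
proof -
  let ?R = "median_radius med S"
  have "0 \<le> sep_lo \<epsilon> \<sigma> p q" by (simp add: sep_lo_def)
  with \<theta>(1) have \<theta>0: "0 \<le> \<theta>" by linarith
  define s where "s = sqrt \<theta>"
  have "max (min (\<sigma>*p) (\<sigma>*q)) 0 / (1-\<epsilon>) < s"
    using \<theta>(1) \<epsilon> unfolding s_def sep_lo_def by (intro real_less_rsqrt) simp
  then have lo: "min (\<sigma>*p) (\<sigma>*q) < (1-\<epsilon>) * s"
    using \<epsilon> by (simp add: divide_less_eq mult.commute)
  have "s < max (max (\<sigma>*p) (\<sigma>*q)) 0 / (1+\<epsilon>)"
    using \<theta>(2) \<epsilon> real_sqrt_less_mono[OF \<theta>(2)] unfolding s_def sep_hi_def by simp
  then have "(1+\<epsilon>) * s < max (max (\<sigma>*p) (\<sigma>*q)) 0"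
    using \<epsilon> by (simp add: less_divide_eq mult.commute)
  moreover have "0 \<le> (1+\<epsilon>) * s" using \<epsilon> \<theta>0 by (simp add: s_def)
  ultimately have hi: "(1+\<epsilon>) * s < max (\<sigma>*p) (\<sigma>*q)"
    by (auto simp: less_max_iff_disj)
  have scaled: "\<sigma> * (c$i - med S$i) / ?R < (1-\<epsilon>) * s \<longleftrightarrow> \<sigma> * (c$i - med S$i) < (1-\<epsilon>) * sqrt \<theta> * ?R"
    "(1+\<epsilon>) * s < \<sigma> * (c$i - med S$i) / ?R \<longleftrightarrow> (1+\<epsilon>) * sqrt \<theta> * ?R < \<sigma> * (c$i - med S$i)" for c
    using R by (simp_all add: divide_less_eq less_divide_eq s_def)
  show ?thesis
  proof (cases "\<sigma>*p \<le> \<sigma>*q")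
    case True
    then show ?thesis
      using lo hi centers_step_separates_sides[OF S \<sigma> \<epsilon>(1) \<theta>0] scaled[of a] scaled[of b]
      by (simp add: p_def q_def)
  next
    case False
    then show ?thesis
      using lo hi centers_step_separates_sides[OF S(1,3,2) \<sigma> \<epsilon>(1) \<theta>0] scaled[of a] scaled[of b]
      by (auto simp: p_def q_def)
  qed
qed

lemma centers_step_separates_on_boxes:
  fixes S :: "(real^'d) set"
  assumes S: "2 \<le> card S" "a \<in> S" "b \<in> S" and R: "0 < median_radius med S" and \<epsilon>: "0 \<le> \<epsilon>" "\<epsilon> < 1"
  defines "p \<equiv> \<lambda>i. (a$i - med S$i) / median_radius med S"
      and "q \<equiv> \<lambda>i. (b$i - med S$i) / median_radius med S"
  shows "{ch. a \<in> centers_step med \<epsilon> x S ch \<and> b \<in> centers_step med \<epsilon> x S ch} \<inter> separating_boxes \<epsilon> p q = {}"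
proof safe
  fix i \<theta> \<sigma> assume box: "(i, \<theta>, \<sigma>) \<in> separating_boxes \<epsilon> p q"
    and "a \<in> centers_step med \<epsilon> x S (i, \<theta>, \<sigma>)" "b \<in> centers_step med \<epsilon> x S (i, \<theta>, \<sigma>)"
  moreover have "\<sigma> \<in> {-1, 1}" "sep_lo \<epsilon> \<sigma> (p i) (q i) < \<theta>" "\<theta> < sep_hi \<epsilon> \<sigma> (p i) (q i)"
    using box by (auto simp: separating_boxes_def)
  ultimately show "(i, \<theta>, \<sigma>) \<in> {}"
    using centers_step_separates[where i=i and \<theta>=\<theta> and x=x, OF S R \<epsilon>] by (simp add: p_def q_def)
qed

section \<open>The distribution of one choice\<close>

lemma prob_space_choice_measure: "prob_space (choice_measure :: 'd::finite choice measure)"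
  unfolding choice_measure_def
  by (intro prob_space_pair prob_space_uniform_count_measure prob_space_uniform_measure) auto

lemma measurable_choice_component[measurable]:
  "(\<lambda>ch. c $ fst ch) \<in> borel_measurable (choice_measure :: 'd::finite choice measure)"
proof -
  have "fst \<in> measurable (choice_measure :: 'd choice measure) (count_space UNIV)"
    unfolding choice_measure_def by measurable
  then show ?thesis by (rule measurable_compose) simp
qed

lemma measurable_choice_theta[measurable]:
  "(\<lambda>ch. fst (snd ch)) \<in> borel_measurable (choice_measure :: 'd::finite choice measure)"
  unfolding choice_measure_def by measurable

lemma measurable_choice_sign[measurable]:
  "(\<lambda>ch. snd (snd ch)) \<in> borel_measurable (choice_measure :: 'd::finite choice measure)"
proof -
  have "(\<lambda>x. x) \<in> borel_measurable (uniform_count_measure {-1, 1::real})"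
    by (subst measurable_cong_sets[OF sets_uniform_count_measure_count_space refl]) simp
  then have "snd \<in> borel_measurable (uniform_measure lborel {0<..<(1::real)} \<Otimes>\<^sub>M uniform_count_measure {-1, 1::real})"
    by (rule measurable_compose[OF measurable_snd])
  then show ?thesis unfolding choice_measure_def by (rule measurable_compose[OF measurable_snd])
qed

lemma measurable_filter_count_space:
  assumes "finite S0" "S \<subseteq> S0" and [measurable]: "\<And>c. c \<in> S \<Longrightarrow> Measurable.pred M (P c)"
  shows "(\<lambda>\<omega>. {c\<in>S. P c \<omega>}) \<in> measurable M (count_space (Pow S0))"
proof -
  have "(\<lambda>\<omega>. {c\<in>S. P c \<omega>}) -` {T} \<inter> space M \<in> sets M" if "T \<subseteq> S0" for T
  proof -
    have "(\<lambda>\<omega>. {c\<in>S. P c \<omega>}) -` {T} \<inter> space M = {\<omega>\<in>space M. \<forall>c\<in>S0. (c \<in> S \<and> P c \<omega>) = (c \<in> T)}"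
      using that assms(2) by auto
    also have "\<dots> \<in> sets M"
      unfolding Measurable.pred_def[symmetric]
    proof (rule pred_intros_finite(3)[where P="\<lambda>\<omega> c. (c \<in> S \<and> P c \<omega>) = (c \<in> T)", OF assms(1)])
      fix c
      show "Measurable.pred M (\<lambda>\<omega>. (c \<in> S \<and> P c \<omega>) = (c \<in> T))"
      proof (cases "c \<in> S")
        case True
        then have [measurable]: "Measurable.pred M (P c)" by (rule assms(3))
        show ?thesis using True by simp measurable
      qed simp
    qed
    finally show ?thesis .
  qed
  then show ?thesis using assms(1,2) by (subst measurable_count_space_eq2) auto
qed

lemma measurable_centers_step:
  assumes "finite S0" "S \<subseteq> S0"
  shows "centers_step med \<epsilon> x S \<in> measurable (choice_measure :: 'd::finite choice measure) (count_space (Pow S0))"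
proof -
  have L[measurable]: "left_centers med \<epsilon> S \<in> measurable choice_measure (count_space (Pow S0))"
    and R[measurable]: "right_centers med \<epsilon> S \<in> measurable choice_measure (count_space (Pow S0))"
    unfolding left_centers_def right_centers_def
    by (intro measurable_filter_count_space[OF assms]; measurable)+
  have [measurable]: "Measurable.pred choice_measure (\<lambda>ch. left_centers med \<epsilon> S ch = {})"
    by (rule pred_eq_const1[OF L]) simp
  have [measurable]: "Measurable.pred choice_measure (\<lambda>ch. right_centers med \<epsilon> S ch = {})"
    by (rule pred_eq_const1[OF R]) simp
  have [measurable]: "(\<lambda>ch. S) \<in> measurable choice_measure (count_space (Pow S0))"
    using assms(2) by (intro measurable_const) simp
  show ?thesis unfolding centers_step_def split_threshold_def by measurable
qed

lemma measure_choice_box: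
  fixes l r \<sigma> :: real and i :: "'d::finite"
  assumes "0 \<le> l" "l \<le> r" "r \<le> 1" "\<sigma> \<in> {-1, 1}"
  shows "measure (choice_measure :: 'd choice measure) ({i} \<times> ({l<..<r} \<times> {\<sigma>})) = (r - l) / (2 * CARD('d))"
proof -
  let ?I = "uniform_count_measure (UNIV :: 'd set)"
  let ?\<Theta> = "uniform_measure lborel {0<..<(1::real)}"
  let ?\<Sigma> = "uniform_count_measure {-1, 1::real}"
  have measure_Times: "measure (N \<Otimes>\<^sub>M M) (A \<times> B) = measure N A * measure M B"
    if "prob_space M" "A \<in> sets N" "B \<in> sets M" for N :: "'a measure" and M :: "'b measure" and A B
    using sigma_finite_measure.emeasure_pair_measure_Times[OF prob_space_imp_sigma_finite[OF that(1)] that(2,3)]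
    by (simp add: measure_def enn2real_mult)
  have \<Theta>: "prob_space ?\<Theta>" and \<Sigma>: "prob_space ?\<Sigma>"
    by (intro prob_space_uniform_measure prob_space_uniform_count_measure; simp)+
  have sets: "{\<sigma>} \<in> sets ?\<Sigma>" "{i} \<in> sets ?I" "{l<..<r} \<in> sets ?\<Theta>"
    using assms(4) by (simp_all add: sets_uniform_count_measure)
  have "measure ?\<Theta> {l<..<r} = r - l"
  proof -
    have "{0<..<(1::real)} \<inter> {l<..<r} = {l<..<r}" using assms by auto
    moreover have "ennreal (r - l) / 1 = ennreal (r - l)" by (simp add: divide_ennreal_def)
    ultimately show ?thesis using assms by (simp add: measure_def emeasure_uniform_measure)
  qed
  then have "measure (?\<Theta> \<Otimes>\<^sub>M ?\<Sigma>) ({l<..<r} \<times> {\<sigma>}) = (r - l) * measure ?\<Sigma> {\<sigma>}"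
    using measure_Times[OF \<Sigma> sets(3,1)] by simp
  then have "measure choice_measure ({i} \<times> ({l<..<r} \<times> {\<sigma>})) = measure ?I {i} * ((r - l) * measure ?\<Sigma> {\<sigma>})"
    unfolding choice_measure_def using measure_Times[OF prob_space_pair[OF \<Theta> \<Sigma>] sets(2)] sets
    by (simp add: pair_measureI)
  also have "\<dots> = (r - l) / (2 * CARD('d))"
    using assms(4) by (auto simp: measure_uniform_count_measure)
  finally show ?thesis .
qed

lemma measure_separating_box:
  assumes \<sigma>: "\<sigma> \<in> {-1, 1}" and pq: "\<bar>p\<bar> \<le> 1" "\<bar>q\<bar> \<le> 1" and \<epsilon>: "0 \<le> \<epsilon>"
  shows "measure (choice_measure :: 'd::finite choice measure) ({i} \<times> ({sep_lo \<epsilon> \<sigma> p q<..<sep_hi \<epsilon> \<sigma> p q} \<times> {\<sigma>}))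
           = sep_len \<epsilon> \<sigma> p q / (2 * CARD('d))"
proof (cases "sep_lo \<epsilon> \<sigma> p q \<le> sep_hi \<epsilon> \<sigma> p q")
  case True
  have "max (max (\<sigma> * p) (\<sigma> * q)) 0 \<le> 1 + \<epsilon>"
    using \<sigma> pq \<epsilon> by (auto simp: abs_le_iff)
  then have "sep_hi \<epsilon> \<sigma> p q \<le> 1"
    using \<epsilon> by (simp add: sep_hi_def power_le_one divide_le_eq)
  moreover have "0 \<le> sep_lo \<epsilon> \<sigma> p q" by (simp add: sep_lo_def)
  ultimately show ?thesis
    using True \<sigma> measure_choice_box by (simp add: sep_len_def)
next
  case False
  then show ?thesis by (simp add: sep_len_def)
qed

lemma measure_separating_boxes:
  fixes p q :: "'d::finite \<Rightarrow> real"
  assumes pq: "\<And>i. \<bar>p i\<bar> \<le> 1" "\<And>i. \<bar>q i\<bar> \<le> 1" and \<epsilon>: "0 \<le> \<epsilon>" "\<epsilon> < 1"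
  shows "separating_boxes \<epsilon> p q \<in> sets choice_measure"
    and "measure choice_measure (separating_boxes \<epsilon> p q)
           = (\<Sum>i\<in>UNIV. sep_len \<epsilon> 1 (p i) (q i) + sep_len \<epsilon> (-1) (p i) (q i)) / (2 * CARD('d))"
proof -
  define box where "box = (\<lambda>(i, \<sigma>). {i} \<times> ({sep_lo \<epsilon> \<sigma> (p i) (q i)<..<sep_hi \<epsilon> \<sigma> (p i) (q i)} \<times> {\<sigma>}))"
  have union: "separating_boxes \<epsilon> p q = (\<Union>k\<in>UNIV \<times> {-1, 1}. box k)"
    by (simp add: separating_boxes_def box_def)
  have box_sets: "box k \<in> sets choice_measure" if "k \<in> UNIV \<times> {-1, 1}" for k
    using that unfolding box_def choice_measure_def
    by (cases k) (auto intro!: pair_measureI simp: sets_uniform_count_measure)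
  then show "separating_boxes \<epsilon> p q \<in> sets choice_measure"
    unfolding union by (intro sets.finite_UN) auto
  have box_measure: "measure choice_measure (box (i, \<sigma>)) = sep_len \<epsilon> \<sigma> (p i) (q i) / (2 * CARD('d))"
    if "\<sigma> \<in> {-1, 1}" for i \<sigma>
    using measure_separating_box[OF that pq(1,2)[of i] \<epsilon>(1)] by (simp add: box_def)
  have "disjoint_family_on box (UNIV \<times> {-1, 1})"
    unfolding disjoint_family_on_def box_def by auto
  then have "measure choice_measure (separating_boxes \<epsilon> p q) = (\<Sum>k\<in>UNIV \<times> {-1, 1}. measure choice_measure (box k))"
    unfolding union using box_sets
    by (intro finite_measure.finite_measure_finite_Union prob_space.finite_measure[OF prob_space_choice_measure]) auto
  also have "\<dots> = (\<Sum>i\<in>UNIV. \<Sum>\<sigma>\<in>{-1, 1}. measure choice_measure (box (i, \<sigma>)))"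
    unfolding sum.cartesian_product by simp
  also have "\<dots> = (\<Sum>i\<in>UNIV. sep_len \<epsilon> 1 (p i) (q i) / (2 * CARD('d)) + sep_len \<epsilon> (-1) (p i) (q i) / (2 * CARD('d)))"
    by (simp add: box_measure add.commute)
  finally show "measure choice_measure (separating_boxes \<epsilon> p q)
           = (\<Sum>i\<in>UNIV. sep_len \<epsilon> 1 (p i) (q i) + sep_len \<epsilon> (-1) (p i) (q i)) / (2 * CARD('d))"
    by (simp add: sum_divide_distrib add_divide_distrib)
qed

section \<open>Halving the diameter\<close>

lemma (in finite_measure) measure_UNION_le_card_mult:
  assumes "finite I" "\<And>i. i \<in> I \<Longrightarrow> A i \<in> sets M" "\<And>i. i \<in> I \<Longrightarrow> measure M (A i) \<le> b"
  shows "measure M (\<Union>i\<in>I. A i) \<le> real (card I) * b"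
proof -
  have "measure M (\<Union>i\<in>I. A i) \<le> (\<Sum>i\<in>I. measure M (A i))"
    using assms(1,2) by (intro measure_UNION_le) auto
  also have "\<dots> \<le> real (card I) * b" using sum_bounded_above[of I "\<lambda>i. measure M (A i)"] assms(3) by simp
  finally show ?thesis .
qed

lemma measure_centers_step_keeps_pair_le:
  fixes S :: "(real^'d::finite) set"
  assumes S: "finite S" "a \<in> S" "b \<in> S" "a \<noteq> b" and med: "is_median S (med S)"
    and diam: "\<And>c c'. c \<in> S \<Longrightarrow> c' \<in> S \<Longrightarrow> norm (c - c') \<le> D" and far: "D \<le> 2 * norm (a - b)"
    and \<epsilon>: "0 \<le> \<epsilon>" "\<epsilon> \<le> 1/320"
  shows "measure choice_measure {ch \<in> space choice_measure. a \<in> centers_step med \<epsilon> x S ch \<and> b \<in> centers_step med \<epsilon> x S ch}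
           \<le> 1 - 1 / (64 * real CARD('d))"
proof -
  let ?M = "choice_measure :: 'd choice measure" and ?R = "median_radius med S"
  define p where "p = (\<lambda>i. (a$i - med S$i) / ?R)"
  define q where "q = (\<lambda>i. (b$i - med S$i) / ?R)"
  interpret prob_space ?M by (rule prob_space_choice_measure)
  have R: "0 < ?R" by (rule median_radius_pos[OF S])
  have aR: "norm (a - med S) \<le> ?R" "norm (b - med S) \<le> ?R" using norm_sub_le_median_radius S by auto
  have "?R^2 \<le> 2 * D^2" using median_radius_sq_le[where med=med and S=S, OF S(1) _ med diam] S(2) by auto
  moreover have "D^2 \<le> 4 * norm (a - b)^2"
    using power_mono[OF far, of 2] diam[OF S(2,2)] by (simp add: power_mult_distrib)
  ultimately have "1/32 \<le> (\<Sum>i\<in>UNIV. sep_len \<epsilon> 1 (p i) (q i) + sep_len \<epsilon> (-1) (p i) (q i))"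
    using sep_len_total_ge[OF R aR _ \<epsilon>] by (simp add: p_def q_def)
  moreover have "\<bar>p i\<bar> \<le> 1" "\<bar>q i\<bar> \<le> 1" for i
    using order_trans[OF component_le_norm_cart aR(1), of i] order_trans[OF component_le_norm_cart aR(2), of i] R
    by (simp_all add: p_def q_def abs_divide divide_le_eq)
  moreover have "\<epsilon> < 1" using \<epsilon> by simp
  ultimately have boxes: "separating_boxes \<epsilon> p q \<in> events" "1 / (64 * CARD('d)) \<le> prob (separating_boxes \<epsilon> p q)"
    using measure_separating_boxes[where p=p and q=q] \<epsilon>(1) divide_right_mono[of "1/32" _ "2 * CARD('d)"]
    by auto
  have "card {a, b} \<le> card S" using S by (intro card_mono) auto
  then have "{ch \<in> space ?M. a \<in> centers_step med \<epsilon> x S ch \<and> b \<in> centers_step med \<epsilon> x S ch}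
      \<subseteq> space ?M - separating_boxes \<epsilon> p q"
    using centers_step_separates_on_boxes[OF _ S(2,3) R, of \<epsilon> x] S(4) \<epsilon> by (auto simp: p_def q_def)
  then have "prob {ch \<in> space ?M. a \<in> centers_step med \<epsilon> x S ch \<and> b \<in> centers_step med \<epsilon> x S ch}
      \<le> prob (space ?M - separating_boxes \<epsilon> p q)"
    using boxes by (intro finite_measure_mono) auto
  also have "\<dots> \<le> 1 - 1 / (64 * real CARD('d))" using boxes by (simp add: prob_compl)
  finally show ?thesis .
qed

lemma one_minus_inverse_nonneg: "0 \<le> 1 - 1 / (64 * real CARD('d::finite))"
proof -
  have "1 \<le> 64 * real CARD('d)" using zero_less_card_finite[where 'a='d] by linarith
  then show ?thesis by simp
qed

lemma measure_pair_survives_le: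
  fixes S :: "(real^'d::finite) set" and L :: nat
  assumes S: "finite S" "a \<in> S" "b \<in> S" "a \<noteq> b"
    and med: "\<And>S'. finite S' \<Longrightarrow> S' \<noteq> {} \<Longrightarrow> is_median S' (med S')"
    and diam: "\<And>c c'. c \<in> S \<Longrightarrow> c' \<in> S \<Longrightarrow> norm (c - c') \<le> D" and far: "D \<le> 2 * norm (a - b)"
    and \<epsilon>: "0 \<le> \<epsilon>" "\<epsilon> \<le> 1/320"
  defines "P \<equiv> PiM {..<L} (\<lambda>_. choice_measure :: 'd choice measure)"
  shows "measure P {w \<in> space P. a \<in> chain_run (centers_step med \<epsilon> x) S w L \<and> b \<in> chain_run (centers_step med \<epsilon> x) S w L}
           \<le> (1 - 1 / (64 * real CARD('d))) ^ L"
proof -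
  let ?q = "1 - 1 / (64 * real CARD('d))"
  interpret C: prob_space "choice_measure :: 'd choice measure" by (rule prob_space_choice_measure)
  interpret P: prob_space P unfolding P_def by (intro prob_space_PiM prob_space_choice_measure)
  have "emeasure P {w \<in> space P. chain_run (centers_step med \<epsilon> x) S w L \<in> {T. a \<in> T \<and> b \<in> T}} \<le> ennreal ?q ^ L"
    unfolding P_def
  proof (rule emeasure_chain_run_stays_le[OF prob_space_choice_measure])
    show "countable (Pow S)" using S(1) by (simp add: countable_finite)
    show "centers_step med \<epsilon> x T \<in> measurable choice_measure (count_space (Pow S))" if "T \<in> Pow S" for T
      using measurable_centers_step S(1) that by blast
    show "T \<in> {T. a \<in> T \<and> b \<in> T}" if "centers_step med \<epsilon> x T ch \<in> {T. a \<in> T \<and> b \<in> T}" for T ch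
      using that centers_step_subset by blast
    show "emeasure choice_measure {ch \<in> space choice_measure. centers_step med \<epsilon> x T ch \<in> {T. a \<in> T \<and> b \<in> T}}
        \<le> ennreal ?q" if T: "T \<in> Pow S" "T \<in> {T. a \<in> T \<and> b \<in> T}" for T
    proof -
      have "finite T" using S(1) T(1) finite_subset by auto
      moreover have "norm (c - c') \<le> D" if "c \<in> T" "c' \<in> T" for c c'
        using diam T(1) that by blast
      ultimately have "C.prob {ch \<in> space choice_measure. a \<in> centers_step med \<epsilon> x T ch \<and> b \<in> centers_step med \<epsilon> x T ch} \<le> ?q"
        using T S(4) med far \<epsilon> by (intro measure_centers_step_keeps_pair_le) auto
      then show ?thesis by (simp add: C.emeasure_eq_measure ennreal_leI)
    qed
  qed (use S in auto)
  moreover have "0 \<le> ?q" by (rule one_minus_inverse_nonneg)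
  ultimately show ?thesis by (simp add: P.emeasure_eq_measure ennreal_power)
qed

lemma finite_diameter_attained:
  fixes S :: "'a::metric_space set"
  assumes "finite S" "0 < diameter S"
  obtains a b where "a \<in> S" "b \<in> S" "dist a b = diameter S"
proof -
  have "S \<noteq> {}" using assms(2) by auto
  then show thesis using diameter_compact_attained[OF finite_imp_compact[OF assms(1)]] that by blast
qed

lemma two_le_card_if_diameter_pos:
  fixes S :: "'a::metric_space set"
  assumes "finite S" "0 < diameter S"
  shows "2 \<le> card S"
proof -
  obtain a b where ab: "a \<in> S" "b \<in> S" "dist a b = diameter S"
    by (rule finite_diameter_attained[OF assms])
  with assms(2) have "a \<noteq> b" by auto
  then show ?thesis using card_mono[OF assms(1), of "{a, b}"] ab by auto
qed

lemma sets_chain_run_centers_step: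
  fixes S :: "(real^'d::finite) set"
  assumes S: "finite S"
  shows "{w \<in> space (PiM {..<L} (\<lambda>_. choice_measure)). chain_run (centers_step med \<epsilon> x) S w L \<in> Q}
           \<in> sets (PiM {..<L} (\<lambda>_. choice_measure))"
proof -
  let ?run = "\<lambda>w. chain_run (centers_step med \<epsilon> x) S w L" and ?P = "PiM {..<L} (\<lambda>_. choice_measure :: 'd choice measure)"
  have run: "?run \<in> measurable ?P (count_space (Pow S))"
  proof (rule measurable_chain_run)
    show "countable (Pow S)" using S by (simp add: countable_finite)
    show "centers_step med \<epsilon> x T \<in> measurable choice_measure (count_space (Pow S))" if "T \<in> Pow S" for T
      using that by (intro measurable_centers_step[OF S]) auto
  qed simp_all
  have "{w \<in> space ?P. ?run w \<in> Q} = ?run -` (Q \<inter> Pow S) \<inter> space ?P"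
    using chain_run_centers_step_subset[of med \<epsilon> x S] by auto
  then show ?thesis using measurable_sets[OF run, of "Q \<inter> Pow S"] by simp
qed

lemma measure_diameter_not_halved_le:
  fixes S :: "(real^'d::finite) set" and x :: "real^'d" and L :: nat
  assumes S: "finite S" and D: "0 < diameter S"
    and med: "\<And>S'. finite S' \<Longrightarrow> S' \<noteq> {} \<Longrightarrow> is_median S' (med S')"
    and \<epsilon>: "0 \<le> \<epsilon>" "\<epsilon> \<le> 1/320"
  defines "P \<equiv> PiM {..<L} (\<lambda>_. choice_measure :: 'd choice measure)"
  shows "measure P {w \<in> space P. diameter S / 2 \<le> diameter (chain_run (centers_step med \<epsilon> x) S w L)}
           \<le> real (card S)^2 * (1 - 1 / (64 * real CARD('d)))^L"
proof -
  let ?run = "\<lambda>w. chain_run (centers_step med \<epsilon> x) S w L" and ?q = "1 - 1 / (64 * real CARD('d))"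
  interpret P: prob_space P unfolding P_def by (intro prob_space_PiM prob_space_choice_measure)
  define pairs where "pairs = {(a, b) \<in> S \<times> S. diameter S \<le> 2 * norm (a - b)}"
  define E where "E = (\<lambda>(a, b). {w \<in> space P. ?run w \<in> {T. a \<in> T \<and> b \<in> T}})"
  have "{w \<in> space P. diameter S / 2 \<le> diameter (?run w)} \<subseteq> (\<Union>ab\<in>pairs. E ab)"
  proof safe
    fix w assume w: "w \<in> space P" "diameter S / 2 \<le> diameter (?run w)"
    have sub: "?run w \<subseteq> S" by (rule chain_run_centers_step_subset)
    moreover have "0 < diameter (?run w)" using w D by simp
    ultimately obtain a b where "a \<in> ?run w" "b \<in> ?run w" "dist a b = diameter (?run w)"
      using finite_diameter_attained finite_subset[OF _ S] by metis
    then show "w \<in> (\<Union>ab\<in>pairs. E ab)"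
      using w sub by (intro UN_I[of "(a, b)"]) (auto simp: pairs_def E_def dist_norm)
  qed
  moreover have pairs: "pairs \<subseteq> S \<times> S" by (auto simp: pairs_def)
  then have "finite pairs" using S finite_subset by blast
  moreover have E_sets: "E ab \<in> sets P" for ab
    using sets_chain_run_centers_step[OF S, where Q="{T. fst ab \<in> T \<and> snd ab \<in> T}"]
    by (cases ab) (simp add: E_def P_def)
  ultimately have "measure P {w \<in> space P. diameter S / 2 \<le> diameter (?run w)} \<le> measure P (\<Union>ab\<in>pairs. E ab)"
    by (intro P.finite_measure_mono sets.finite_UN) auto
  also have "\<dots> \<le> real (card pairs) * ?q ^ L"
  proof (rule P.measure_UNION_le_card_mult[OF \<open>finite pairs\<close> E_sets])
    show "measure P (E ab) \<le> ?q ^ L" if pair: "ab \<in> pairs" for ab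
    proof -
      obtain a b where ab: "ab = (a, b)" "a \<in> S" "b \<in> S" "diameter S \<le> 2 * norm (a - b)"
        using pair by (cases ab) (auto simp: pairs_def)
      have diam: "norm (c - c') \<le> diameter S" if "c \<in> S" "c' \<in> S" for c c'
        using diameter_bounded_bound[OF finite_imp_bounded[OF S] that] by (simp add: dist_norm)
      have "a \<noteq> b" using ab(4) D by auto
      from measure_pair_survives_le[where L=L and x=x, OF S ab(2,3) this med diam ab(4) \<epsilon>]
      show ?thesis by (simp add: E_def P_def ab(1))
    qed
  qed
  also have "\<dots> \<le> real (card S)^2 * ?q ^ L"
    using card_mono[OF _ pairs] S zero_le_power[OF one_minus_inverse_nonneg[where 'd='d]]
    by (intro mult_right_mono) (auto simp: card_cartesian_product power2_eq_square simp flip: of_nat_mult)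
  finally show ?thesis .
qed

lemma sq_mul_decay_le_inverse_cube:
  fixes k d :: real and L :: nat
  assumes k: "2 \<le> k" and d: "1 \<le> d" and L: "640 * d * ln k \<le> real L"
  shows "k^2 * (1 - 1 / (64 * d))^L \<le> 1 / k^3"
proof -
  have "(1 - 1 / (64 * d))^L \<le> exp (- (1 / (64 * d)))^L"
    using d exp_ge_add_one_self[of "- (1 / (64 * d))"] by (intro power_mono) auto
  also have "\<dots> = exp (- (real L / (64 * d)))" by (simp add: exp_of_nat_mult[symmetric])
  also have "\<dots> \<le> exp (- (10 * ln k))"
    using L d by (simp add: le_divide_eq mult.commute mult.left_commute)
  also have "\<dots> = 1 / k^10"
  proof -
    have "exp (10 * ln k) = exp (ln (k^10))" using k by (simp add: ln_realpow)
    also have "\<dots> = k^10" using k by simp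
    finally show ?thesis by (simp add: exp_minus inverse_eq_divide)
  qed
  finally have "k^2 * (1 - 1 / (64 * d))^L \<le> k^2 * (1 / k^10)"
    using k by (intro mult_left_mono) auto
  also have "\<dots> = 1 / k^8" using k by (simp add: field_simps power_add[symmetric])
  also have "\<dots> \<le> 1 / k^3" using k by (intro divide_left_mono power_increasing) auto
  finally show ?thesis .
qed

theorem lemma4:
  fixes C :: "(real^'d::finite) set" and \<delta> :: real and x :: "real^'d"
    and med :: "(real^'d) set \<Rightarrow> real^'d"
    and n :: nat and h :: "nat \<Rightarrow> 'd choice"
  assumes "finite C"
    and "0 < \<delta>" and "\<delta> < 1"
    and "\<And>S. finite S \<Longrightarrow> S \<noteq> {} \<Longrightarrow> is_median S (med S)"
    and "\<And>s. s < n \<Longrightarrow> valid_choice (h s)"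
    and "Dleaf x (run med (eps_param \<delta> (card C)) (root_tree C) h n) > 0"
  shows "let \<epsilon> = eps_param \<delta> (card C);
             L = nat \<lceil>640 * real CARD('d) * ln (real (card C))\<rceil>;
             Tt = run med \<epsilon> (root_tree C) h n;
             P = PiM {..<L} (\<lambda>_. choice_measure);
             A = {\<omega> \<in> space P. Dleaf x (run med \<epsilon> Tt \<omega> L) \<ge> Dleaf x Tt / 2}
         in A \<in> sets P \<and> measure P A \<le> 1 / real (card C) ^ 3"
proof -
  define \<epsilon> where "\<epsilon> = eps_param \<delta> (card C)"
  define L where "L = nat \<lceil>640 * real CARD('d) * ln (real (card C))\<rceil>"
  define Tt where "Tt = run med \<epsilon> (root_tree C) h n"
  have T: "partition_tree C Tt" unfolding Tt_def by (rule partition_tree_run[OF partition_tree_root])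
  obtain S where S: "leaf_centers x Tt = S" "S \<subseteq> C"
    using partition_treeE[OF T] by metis
  have fin: "finite S" using assms(1) S(2) finite_subset by blast
  have D: "0 < diameter S" using assms(6) S(1) by (simp add: Dleaf_def Tt_def \<epsilon>_def)
  have k: "2 \<le> real (card C)"
    using two_le_card_if_diameter_pos[OF fin D] card_mono[OF assms(1) S(2)] by linarith
  have \<epsilon>: "0 \<le> \<epsilon>" "\<epsilon> \<le> 1/320" using assms(2) k by (auto simp: \<epsilon>_def eps_param_def)
  have D_Tt: "Dleaf x Tt = diameter S" by (simp add: Dleaf_def S(1))
  have leaf: "Dleaf x (run med \<epsilon> Tt \<omega> L) = diameter (chain_run (centers_step med \<epsilon> x) S \<omega> L)" for \<omega>
    by (simp add: Dleaf_def leaf_centers_run[OF T] S(1))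
  have "real (card S)^2 * (1 - 1 / (64 * real CARD('d)))^L \<le> real (card C)^2 * (1 - 1 / (64 * real CARD('d)))^L"
    using card_mono[OF assms(1) S(2)] zero_le_power[OF one_minus_inverse_nonneg[where 'd='d]]
    by (intro mult_right_mono power_mono) auto
  also have "\<dots> \<le> 1 / real (card C) ^ 3"
    using k zero_less_card_finite[where 'a='d] by (intro sq_mul_decay_le_inverse_cube) (auto simp: L_def)
  finally show ?thesis
    using measure_diameter_not_halved_le[where x=x and L=L, OF fin D assms(4) \<epsilon>]
      sets_chain_run_centers_step[OF fin, where Q="{T. diameter S / 2 \<le> diameter T}"]
    by (auto simp: Let_def leaf D_Tt simp flip: \<epsilon>_def L_def Tt_def intro: order_trans)
qed

end
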